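(* Let $L\in(0,\infty)$ and for $k\in\mathbb{N}$ put $n_k:=\lfloor (k/L)^2\rfloor$. Then for every $x\in F(1/2,1)$ there is $k_0=k_0(x)$ such that for every $k\ge k_0$ there exists an integer $j_k$ with $n_{k-1}<j_k\le n_k$ and $T_{n_k}(x)=a_{j_k}(x)$.
   Context: Every $x\in(0,1)\setminus\mathbb{Q}$ has a unique infinite continued fraction expansion $x=[a_1(x),a_2(x),\dots]$ with partial quotients $a_i(x)\in\mathbb{N}=\{1,2,\dots\}$. For $n\in\mathbb{N}$ let $T_n(x):=\max\{a_k(x):1\le k\le n\}$. Define $$F(1/2,1):=\Big\{x\in(0,1)\setminus\mathbb{Q}:\ \lim_{n\to\infty}\frac{T_n(x)}{e^{\sqrt{n}}}=1\Big\}.$$ *)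

theory Defs
  imports Complex_Main
begin

definition gauss_map :: "real \<Rightarrow> real" where
  "gauss_map x = frac (1 / x)"

definition cf_a :: "nat \<Rightarrow> real \<Rightarrow> nat" where
  "cf_a n x = nat \<lfloor>1 / (gauss_map ^^ (n - 1)) x\<rfloor>"

definition cf_T :: "nat \<Rightarrow> real \<Rightarrow> nat" where
  "cf_T n x = Max ((\<lambda>k. cf_a k x) ` {1..n})"

definition F_half_one :: "real set" where
  "F_half_one = {x. x \<in> {0<..<1} \<and> x \<notin> \<rat> \<and>
     ((\<lambda>n. real (cf_T n x) / exp (sqrt (real n))) \<longlonglongrightarrow> 1)}"

definition n_seq :: "real \<Rightarrow> nat \<Rightarrow> nat" where
  "n_seq L k = nat \<lfloor>(real k / L)^2\<rfloor>"

end

theory Submission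
  imports Defs
begin

text \<open>Since \<open>n_k \<approx> (k/L)\<^sup>2\<close>, the value \<open>sqrt n\<close> grows by at least \<open>1/(2L)\<close> from
  \<open>n_(k-1)\<close> to \<open>n_k\<close>, so \<open>exp (sqrt n)\<close> grows by the fixed factor \<open>exp (1/(2L)) > 1\<close>.
  As \<open>T_n(x) / exp (sqrt n) \<longrightarrow> 1\<close>, eventually \<open>T_(n_(k-1))(x) < T_(n_k)(x)\<close>, and a strict
  increase of the running maximum is attained at a new index in \<open>(n_(k-1), n_k]\<close>.\<close>

lemma Max_image_increase_attained:
  fixes f :: "nat \<Rightarrow> 'a::linorder"
  assumes "1 \<le> a" "a \<le> b" "Max (f ` {1..a}) < Max (f ` {1..b})"
  shows "\<exists>j. a < j \<and> j \<le> b \<and> Max (f ` {1..b}) = f j"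
proof -
  have "Max (f ` {1..b}) \<in> f ` {1..b}"
    using assms by (intro Max_in) auto
  then obtain j where j: "j \<in> {1..b}" "Max (f ` {1..b}) = f j" by auto
  have "a < j"
  proof (rule ccontr)
    assume "\<not> a < j"
    then have "f j \<le> Max (f ` {1..a})" using j by (intro Max_ge) auto
    then show False using j assms by (metis not_le)
  qed
  then show ?thesis using j by auto
qed

lemma cf_T_increase_attained:
  assumes "1 \<le> a" "a \<le> b" "cf_T a x < cf_T b x"
  shows "\<exists>j. a < j \<and> j \<le> b \<and> cf_T b x = cf_a j x"
  using Max_image_increase_attained[of a b "\<lambda>k. cf_a k x"] assms
  unfolding cf_T_def by simp

lemma eventually_increasing_if_ratio_tendsto_one:
  fixes f g :: "nat \<Rightarrow> real" and s :: "nat \<Rightarrow> nat"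
  assumes lim: "(\<lambda>n. f n / g n) \<longlonglongrightarrow> 1"
    and s: "filterlim s at_top sequentially"
    and g_pos: "\<And>n. g n > 0" and q: "q > 1"
    and growth: "eventually (\<lambda>m. q * g (s m) \<le> g (s (Suc m))) sequentially"
  shows "eventually (\<lambda>m. f (s m) < f (s (Suc m))) sequentially"
proof -
  define B where "B m = f (s m) / g (s m)" for m
  have B: "B \<longlonglongrightarrow> 1"
    unfolding B_def using filterlim_compose[OF lim s] by simp
  have BSuc: "(\<lambda>m. B (Suc m)) \<longlonglongrightarrow> 1"
    using B by (rule LIMSEQ_Suc)
  have "(\<lambda>m. B (Suc m) * q - B m) \<longlonglongrightarrow> 1 * q - 1"
    by (intro tendsto_intros B BSuc)
  then have ev_gap: "eventually (\<lambda>m. B m < B (Suc m) * q) sequentially"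
    using q by (auto dest: order_tendstoD(1)[where a = 0] elim: eventually_mono)
  have ev_pos: "eventually (\<lambda>m. B (Suc m) > 0) sequentially"
    using order_tendstoD(1)[OF BSuc, of 0] by simp
  show ?thesis
    using ev_gap ev_pos growth
  proof eventually_elim
    case (elim m)
    have "f (s m) = B m * g (s m)"
      using g_pos[of "s m"] by (simp add: B_def)
    also have "\<dots> < B (Suc m) * (q * g (s m))"
      using elim(1) g_pos[of "s m"] by (simp add: mult.assoc[symmetric])
    also have "\<dots> \<le> B (Suc m) * g (s (Suc m))"
      using elim(2,3) by simp
    also have "\<dots> = f (s (Suc m))"
      using g_pos[of "s (Suc m)"] by (simp add: B_def)
    finally show ?case .
  qed
qed

lemma n_seq_le: "real (n_seq L k) \<le> (real k / L)^2"
  unfolding n_seq_def by simp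

lemma n_seq_ge: "real (n_seq L k) \<ge> (real k / L)^2 - 1"
  unfolding n_seq_def by linarith

lemma n_seq_mono: "L > 0 \<Longrightarrow> m \<le> k \<Longrightarrow> n_seq L m \<le> n_seq L k"
  unfolding n_seq_def
  by (intro nat_mono floor_mono power_mono divide_right_mono) auto

lemma filterlim_n_seq_at_top:
  assumes "L > 0" shows "filterlim (n_seq L) at_top sequentially"
proof (subst filterlim_at_top, intro allI)
  fix Z :: nat
  show "eventually (\<lambda>k. Z \<le> n_seq L k) sequentially"
    using eventually_ge_at_top[of "nat \<lceil>L * (real Z + 1)\<rceil>"]
  proof (rule eventually_mono)
    fix k assume "k \<ge> nat \<lceil>L * (real Z + 1)\<rceil>"
    then have "real k \<ge> L * (real Z + 1)" by linarith
    then have y: "real k / L \<ge> real Z + 1"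
      using assms by (simp add: field_simps)
    then have "(real k / L)^2 \<ge> real k / L"
      by (smt (verit) of_nat_0_le_iff power2_eq_square mult_le_cancel_left1)
    then show "Z \<le> n_seq L k"
      using n_seq_ge[where L = L and k = k] y by linarith
  qed
qed

lemma sqrt_n_seq_gap:
  assumes L: "L > 0" and m1: "real m + 1 \<ge> L" and m2: "real m + 1 \<ge> 2 * L^2"
  shows "sqrt (real (n_seq L m)) + 1 / (2*L) \<le> sqrt (real (n_seq L (Suc m)))"
proof -
  define y where "y = (real m + 1) / L"
  have y1: "y \<ge> 1" using m1 L by (simp add: y_def field_simps)
  have y2: "y \<ge> 2 * L" using m2 L by (simp add: y_def field_simps power2_eq_square)
  have "(y - 1/y)^2 = y^2 - 2 + 1/y^2"
    using y1 by (simp add: power2_eq_square field_simps)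
  also have "\<dots> \<le> y^2 - 1"
    using y1 by (simp add: power_le_one_iff)
  also have "\<dots> \<le> real (n_seq L (Suc m))"
    using n_seq_ge[where L = L and k = "Suc m"] by (simp add: y_def add.commute)
  finally have upper: "y - 1/y \<le> sqrt (real (n_seq L (Suc m)))"
    using y1 by (intro real_le_rsqrt) auto
  have "sqrt (real (n_seq L m)) \<le> sqrt ((real m / L)^2)"
    using n_seq_le real_sqrt_le_mono by blast
  also have "\<dots> = real m / L" using L by simp
  finally have lower: "sqrt (real (n_seq L m)) \<le> real m / L" .
  have "y - real m / L = 1 / L" using L by (simp add: y_def field_simps)
  moreover have "1/y \<le> 1/(2*L)" using y2 L by (simp add: frac_le)
  ultimately show ?thesis using upper lower by linarith
qed

lemma exp_sqrt_n_seq_growth: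
  assumes "L > 0"
  shows "eventually (\<lambda>m. exp (1 / (2*L)) * exp (sqrt (real (n_seq L m)))
            \<le> exp (sqrt (real (n_seq L (Suc m))))) sequentially"
  using eventually_ge_at_top[of "nat \<lceil>L\<rceil> + nat \<lceil>2 * L^2\<rceil>"]
proof (rule eventually_mono)
  fix m assume "m \<ge> nat \<lceil>L\<rceil> + nat \<lceil>2*L^2\<rceil>"
  then have "real m + 1 \<ge> L" "real m + 1 \<ge> 2 * L^2" by linarith+
  from sqrt_n_seq_gap[OF assms this] show "exp (1 / (2*L)) * exp (sqrt (real (n_seq L m)))
            \<le> exp (sqrt (real (n_seq L (Suc m))))"
    by (simp add: exp_add[symmetric] add.commute)
qed

theorem lemma1:
  fixes L :: real
  assumes "L > 0"
  shows "\<forall>x \<in> F_half_one. \<exists>k0. \<forall>k \<ge> k0. \<exists>j.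
           n_seq L (k - 1) < j \<and> j \<le> n_seq L k \<and> cf_T (n_seq L k) x = cf_a j x"
proof
  fix x assume "x \<in> F_half_one"
  then have lim: "(\<lambda>n. real (cf_T n x) / exp (sqrt (real n))) \<longlonglongrightarrow> 1"
    unfolding F_half_one_def by auto
  have "eventually (\<lambda>m. cf_T (n_seq L m) x < cf_T (n_seq L (Suc m)) x) sequentially"
    using eventually_increasing_if_ratio_tendsto_one[OF lim filterlim_n_seq_at_top[OF assms]
        _ _ exp_sqrt_n_seq_growth[OF assms]] assms
    by (simp add: one_less_exp_iff)
  moreover have "eventually (\<lambda>m. 1 \<le> n_seq L m) sequentially"
    using filterlim_n_seq_at_top[OF assms] by (simp add: filterlim_at_top)
  ultimately have "eventually (\<lambda>m. \<exists>j. n_seq L m < j \<and> j \<le> n_seq L (Suc m) \<and>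
           cf_T (n_seq L (Suc m)) x = cf_a j x) sequentially"
  proof eventually_elim
    case (elim m)
    then show ?case
      using cf_T_increase_attained[OF elim(2) n_seq_mono[OF assms le_SucI[OF order_refl]] elim(1)]
      by simp
  qed
  then obtain m0 where m0: "\<And>m. m \<ge> m0 \<Longrightarrow> \<exists>j. n_seq L m < j \<and> j \<le> n_seq L (Suc m) \<and>
           cf_T (n_seq L (Suc m)) x = cf_a j x"
    unfolding eventually_sequentially by blast
  have "\<exists>j. n_seq L (k - 1) < j \<and> j \<le> n_seq L k \<and> cf_T (n_seq L k) x = cf_a j x"
    if "k \<ge> Suc m0" for k
    using m0[of "k - 1"] that by (simp add: Suc_diff_Suc)
  then show "\<exists>k0. \<forall>k \<ge> k0. \<exists>j. n_seq L (k - 1) < j \<and> j \<le> n_seq L k \<and>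
      cf_T (n_seq L k) x = cf_a j x"
    by blast
qed

end
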